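(* Let $\Phi\triangleright\Gamma\vdash^{(b,e,m,f)}t:\sigma$ be a tight derivation of system $\mathscr{E}$ (i.e. $\mathrm{tight}(\Gamma)$ and $\mathrm{tight}(\sigma)$). Then $t\in\mathcal{M}$ if and only if $b=e=m=0$.
   Context: Pair pattern calculus: patterns $p,q ::= x\mid\langle p,q\rangle$ (linear); $\mathrm{var}(p)$ = variables of $p$; $p\# q$ means disjoint variables. Terms $t,u ::= x\mid\lambda p.t\mid\langle t,u\rangle\mid t\,u\mid t[p/u]$, $\mathrm{var}(p)$ bound in $t$ in $\lambda p.t$ and $t[p/u]$; terms modulo $\alpha$. Canonical forms $\mathcal{M} ::= \lambda p.\mathcal{M}\mid\langle t,t\rangle\mid\mathcal{M}[\langle p_1,p_2\rangle/\mathcal{N}]\mid\mathcal{N}$; pure canonical forms $\mathcal{N} ::= x\mid\mathcal{N}\,t\mid\mathcal{N}[\langle p_1,p_2\rangle/\mathcal{N}]$. System $\mathscr{E}$. Types: tight types $\mathtt{t} ::= \bullet_{\mathcal{N}}\mid\bullet_{\mathcal{M}}$; types $\sigma ::= \mathtt{t}\mid \mathcal{A}_1\times\mathcal{A}_2\mid \mathcal{A}\to\sigma$; multi-types $\mathcal{A} ::= [\sigma_k]_{k\in K}$ (finite, possibly empty $[\,]$). Contexts map variables to multi-types, $\mathrm{dom}(\Gamma)$ = variables with non-empty multi-type; $\wedge$ pointwise multiset union; $\Gamma|_p$ restriction to $\mathrm{var}(p)$; $\Gamma\setminus\mathrm{var}(p)$ removal. $\mathrm{tight}(\sigma)$ iff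 $\sigma\in\{\bullet_{\mathcal{N}},\bullet_{\mathcal{M}}\}$, extended elementwise to multi-types and contexts. Rules: (pat_v) $x:\mathcal{A}\Vdash^{(1,0,0)} x:\mathcal{A}$. (pat_×) from $\Gamma\Vdash^{(e_p,m_p,f_p)}p:\mathcal{A}$, $\Delta\Vdash^{(e_q,m_q,f_q)}q:\mathcal{B}$, $p\#q$ infer $\Gamma\wedge\Delta\Vdash^{(e_p+e_q,1+m_p+m_q,f_p+f_q)}\langle p,q\rangle:[\mathcal{A}\times\mathcal{B}]$. (pat_p) if $\mathrm{dom}(\Gamma)\subseteq\mathrm{var}(\langle p,q\rangle)$ and $\mathrm{tight}(\Gamma)$ then $\Gamma\Vdash^{(0,0,1)}\langle p,q\rangle:[\bullet_{\mathcal{N}}]$. (ax) $x:[\sigma]\vdash^{(0,0,0,0)}x:\sigma$. (abs) from $\Gamma\vdash^{(b,e,m,f)}t:\sigma$ and $\Gamma|_p\Vdash^{(e_p,m_p,f_p)}p:\mathcal{A}$ infer $\Gamma\setminus\mathrm{var}(p)\vdash^{(b+1,e+e_p,m+m_p,f+f_p)}\lambda p.t:\mathcal{A}\to\sigma$. (abs_p) from $\Gamma\vdash^{(b,e,m,f)}t:\mathtt{t}$ ($\mathtt{t}$ tight) and $\mathrm{tight}(\Gamma|_p)$ infer $\Gamma\setminus\mathrm{var}(p)\vdash^{(b,e,m,f+1)}\lambda p.t:\bullet_{\mathcal{M}}$. (many) from $(\Gamma_k\vdash^{(b_k,e_k,m_k,f_k)}t:\sigma_k)_{k\in K}$ infer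 $\wedge_k\Gamma_k\vdash^{(\sum b_k,\sum e_k,\sum m_k,\sum f_k)}t:[\sigma_k]_{k\in K}$. (app) from $\Gamma\vdash^{(b_t,e_t,m_t,f_t)}t:\mathcal{A}\to\sigma$, $\Delta\vdash^{(b_u,e_u,m_u,f_u)}u:\mathcal{A}$ infer $\Gamma\wedge\Delta\vdash^{(b_t+b_u,e_t+e_u,m_t+m_u,f_t+f_u)}t\,u:\sigma$. (app_p) from $\Gamma\vdash^{(b,e,m,f)}t:\bullet_{\mathcal{N}}$ infer $\Gamma\vdash^{(b,e,m,f+1)}t\,u:\bullet_{\mathcal{N}}$. (pair) from $\Gamma\vdash^{(b_t,e_t,m_t,f_t)}t:\mathcal{A}$, $\Delta\vdash^{(b_u,e_u,m_u,f_u)}u:\mathcal{B}$ infer $\Gamma\wedge\Delta\vdash^{(b_t+b_u,e_t+e_u,m_t+m_u,f_t+f_u)}\langle t,u\rangle:\mathcal{A}\times\mathcal{B}$. (pair_p) $\vdash^{(0,0,0,1)}\langle t,u\rangle:\bullet_{\mathcal{M}}$. (match) from $\Gamma\vdash^{(b_t,e_t,m_t,f_t)}t:\sigma$, $\Gamma|_p\Vdash^{(e_p,m_p,f_p)}p:\mathcal{A}$, $\Delta\vdash^{(b_u,e_u,m_u,f_u)}u:\mathcal{A}$ infer $(\Gamma\setminus\mathrm{var}(p))\wedge\Delta\vdash^{(b_t+b_u,e_t+e_u+e_p,m_t+m_u+m_p,f_t+f_u+f_p)}t[p/u]:\sigma$. A derivation of $\Gamma\vdash^{(b,e,m,f)}t:\sigma$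 is tight if $\mathrm{tight}(\Gamma)$ and $\mathrm{tight}(\sigma)$. *)

theory Defs
  imports Main "HOL-Library.Multiset"
begin

datatype 'v pat = PVar 'v | PPair "'v pat" "'v pat"

fun pvars :: "'v pat \<Rightarrow> 'v set" where
  "pvars (PVar x) = {x}"
| "pvars (PPair p q) = pvars p \<union> pvars q"

definition pdisj :: "'v pat \<Rightarrow> 'v pat \<Rightarrow> bool" where
  "pdisj p q \<longleftrightarrow> pvars p \<inter> pvars q = {}"

fun linear_pat :: "'v pat \<Rightarrow> bool" where
  "linear_pat (PVar x) = True"
| "linear_pat (PPair p q) = (linear_pat p \<and> linear_pat q \<and> pdisj p q)"

datatype 'v trm =
    Var 'v
  | Lam "'v pat" "'v trm"
  | Pair "'v trm" "'v trm"
  | App "'v trm" "'v trm"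
  | Sub "'v trm" "'v pat" "'v trm"   (* t[p/u] *)

fun linear_trm :: "'v trm \<Rightarrow> bool" where
  "linear_trm (Var x) = True"
| "linear_trm (Lam p t) = (linear_pat p \<and> linear_trm t)"
| "linear_trm (Pair t u) = (linear_trm t \<and> linear_trm u)"
| "linear_trm (App t u) = (linear_trm t \<and> linear_trm u)"
| "linear_trm (Sub t p u) = (linear_pat p \<and> linear_trm t \<and> linear_trm u)"

inductive canM :: "'v trm \<Rightarrow> bool" and canN :: "'v trm \<Rightarrow> bool" where
  M_lam: "canM t \<Longrightarrow> canM (Lam p t)"
| M_pair: "canM (Pair t u)"
| M_sub: "canM t \<Longrightarrow> canN u \<Longrightarrow> canM (Sub t (PPair p1 p2) u)"
| M_N: "canN t \<Longrightarrow> canM t"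
| N_var: "canN (Var x)"
| N_app: "canN t \<Longrightarrow> canN (App t u)"
| N_sub: "canN t \<Longrightarrow> canN u \<Longrightarrow> canN (Sub t (PPair p1 p2) u)"

datatype ty = TN | TM | Prod "ty multiset" "ty multiset" | Arr "ty multiset" ty

definition tight :: "ty \<Rightarrow> bool" where
  "tight \<sigma> \<longleftrightarrow> \<sigma> = TN \<or> \<sigma> = TM"

definition tight_m :: "ty multiset \<Rightarrow> bool" where
  "tight_m A \<longleftrightarrow> (\<forall>\<sigma>\<in>#A. tight \<sigma>)"

type_synonym 'v ctx = "'v \<Rightarrow> ty multiset"

definition ctx_empty :: "'v ctx" where
  "ctx_empty = (\<lambda>_. {#})"

definition ctx_single :: "'v \<Rightarrow> ty multiset \<Rightarrow> 'v ctx" where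
  "ctx_single x A = (\<lambda>y. if y = x then A else {#})"

definition ctx_union :: "'v ctx \<Rightarrow> 'v ctx \<Rightarrow> 'v ctx" where
  "ctx_union \<Gamma> \<Delta> = (\<lambda>x. \<Gamma> x + \<Delta> x)"

definition ctx_dom :: "'v ctx \<Rightarrow> 'v set" where
  "ctx_dom \<Gamma> = {x. \<Gamma> x \<noteq> {#}}"

definition ctx_restr :: "'v ctx \<Rightarrow> 'v pat \<Rightarrow> 'v ctx" where
  "ctx_restr \<Gamma> p = (\<lambda>x. if x \<in> pvars p then \<Gamma> x else {#})"

definition ctx_remove :: "'v ctx \<Rightarrow> 'v pat \<Rightarrow> 'v ctx" where
  "ctx_remove \<Gamma> p = (\<lambda>x. if x \<in> pvars p then {#} else \<Gamma> x)"

definition tight_ctx :: "'v ctx \<Rightarrow> bool" where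
  "tight_ctx \<Gamma> \<longleftrightarrow> (\<forall>x. tight_m (\<Gamma> x))"

inductive pty :: "'v ctx \<Rightarrow> nat \<Rightarrow> nat \<Rightarrow> nat \<Rightarrow> 'v pat \<Rightarrow> ty multiset \<Rightarrow> bool" where
  pat_v: "pty (ctx_single x A) 1 0 0 (PVar x) A"
| pat_pair: "pty \<Gamma> ep mp fp p A \<Longrightarrow> pty \<Delta> eq mq fq q B \<Longrightarrow> pdisj p q \<Longrightarrow>
     pty (ctx_union \<Gamma> \<Delta>) (ep + eq) (1 + mp + mq) (fp + fq) (PPair p q) {# Prod A B #}"
| pat_p: "ctx_dom \<Gamma> \<subseteq> pvars (PPair p q) \<Longrightarrow> tight_ctx \<Gamma> \<Longrightarrow>
     pty \<Gamma> 0 0 1 (PPair p q) {# TN #}"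

inductive tyj :: "'v ctx \<Rightarrow> nat \<Rightarrow> nat \<Rightarrow> nat \<Rightarrow> nat \<Rightarrow> 'v trm \<Rightarrow> ty \<Rightarrow> bool"
  and mtyj :: "'v ctx \<Rightarrow> nat \<Rightarrow> nat \<Rightarrow> nat \<Rightarrow> nat \<Rightarrow> 'v trm \<Rightarrow> ty multiset \<Rightarrow> bool" where
  ax: "tyj (ctx_single x {#\<sigma>#}) 0 0 0 0 (Var x) \<sigma>"
| abs: "tyj \<Gamma> b e m f t \<sigma> \<Longrightarrow> pty (ctx_restr \<Gamma> p) ep mp fp p A \<Longrightarrow>
     tyj (ctx_remove \<Gamma> p) (b + 1) (e + ep) (m + mp) (f + fp) (Lam p t) (Arr A \<sigma>)"
| abs_p: "tyj \<Gamma> b e m f t \<tau> \<Longrightarrow> tight \<tau> \<Longrightarrow> tight_ctx (ctx_restr \<Gamma> p) \<Longrightarrow>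
     tyj (ctx_remove \<Gamma> p) b e m (f + 1) (Lam p t) TM"
| many_nil: "mtyj ctx_empty 0 0 0 0 t {#}"
| many_add: "tyj \<Gamma> b e m f t \<sigma> \<Longrightarrow> mtyj \<Delta> b' e' m' f' t A \<Longrightarrow>
     mtyj (ctx_union \<Gamma> \<Delta>) (b + b') (e + e') (m + m') (f + f') t (add_mset \<sigma> A)"
| app: "tyj \<Gamma> bt et mt ft t (Arr A \<sigma>) \<Longrightarrow> mtyj \<Delta> bu eu mu fu u A \<Longrightarrow>
     tyj (ctx_union \<Gamma> \<Delta>) (bt + bu) (et + eu) (mt + mu) (ft + fu) (App t u) \<sigma>"
| app_p: "tyj \<Gamma> b e m f t TN \<Longrightarrow> tyj \<Gamma> b e m (f + 1) (App t u) TN"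
| pair: "mtyj \<Gamma> bt et mt ft t A \<Longrightarrow> mtyj \<Delta> bu eu mu fu u B \<Longrightarrow>
     tyj (ctx_union \<Gamma> \<Delta>) (bt + bu) (et + eu) (mt + mu) (ft + fu) (Pair t u) (Prod A B)"
| pair_p: "tyj ctx_empty 0 0 0 1 (Pair t u) TM"
| match: "tyj \<Gamma> bt et mt ft t \<sigma> \<Longrightarrow> pty (ctx_restr \<Gamma> p) ep mp fp p A \<Longrightarrow>
     mtyj \<Delta> bu eu mu fu u A \<Longrightarrow>
     tyj (ctx_union (ctx_remove \<Gamma> p) \<Delta>) (bt + bu) (et + eu + ep) (mt + mu + mp) (ft + fu + fp)
         (Sub t p u) \<sigma>"

end

theory Submission
  imports Defs
begin

(* In a tight context a canonical form can only be typed by the persistent rules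
   abs_p, app_p, pair_p and pat_p, none of which increments b, e or m: a pure form
   always receives a tight type, so the head of an application N u is typed by app_p,
   and the argument N of a substitution M[<p1,p2>/N] forces its pattern to be typed
   by pat_p.  Conversely, if b = e = m = 0 then no rule abs, pat_v or pat_pair occurs,
   so no subterm has an arrow type, abstractions are typed by abs_p, substitution
   patterns are pairs typed by pat_p whose arguments have type TN, and a term of type
   TN is pure. *)

lemma tight_m_union [simp]: "tight_m (A + B) \<longleftrightarrow> tight_m A \<and> tight_m B"
  by (auto simp: tight_m_def)

lemma tight_m_singleton [simp]: "tight_m {#\<sigma>#} \<longleftrightarrow> tight \<sigma>"
  by (simp add: tight_m_def)

lemma not_tight_Arr [simp]: "\<not> tight (Arr A \<sigma>)"
  and not_tight_Prod [simp]: "\<not> tight (Prod A B)"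
  by (auto simp: tight_def)

lemma tight_ctx_union [simp]: "tight_ctx (ctx_union \<Gamma> \<Delta>) \<longleftrightarrow> tight_ctx \<Gamma> \<and> tight_ctx \<Delta>"
  by (auto simp: tight_ctx_def ctx_union_def)

lemma tight_ctx_single [simp]: "tight_ctx (ctx_single x A) \<longleftrightarrow> tight_m A"
  by (auto simp: tight_ctx_def ctx_single_def tight_m_def)

lemma ctx_union_empty [simp]: "ctx_union \<Gamma> ctx_empty = \<Gamma>"
  by (simp add: ctx_union_def ctx_empty_def)

lemma tight_ctx_remove_restrI:
  "tight_ctx (ctx_remove \<Gamma> p) \<Longrightarrow> tight_ctx (ctx_restr \<Gamma> p) \<Longrightarrow> tight_ctx \<Gamma>"
  by (auto simp: tight_ctx_def ctx_remove_def ctx_restr_def split: if_splits)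

inductive_cases tyj_VarE: "tyj \<Gamma> b e m f (Var x) \<sigma>"
inductive_cases tyj_LamE: "tyj \<Gamma> b e m f (Lam p t) \<sigma>"
inductive_cases tyj_PairE: "tyj \<Gamma> b e m f (Pair t u) \<sigma>"
inductive_cases tyj_AppE: "tyj \<Gamma> b e m f (App t u) \<sigma>"
inductive_cases tyj_SubE: "tyj \<Gamma> b e m f (Sub t p u) \<sigma>"
inductive_cases mtyj_emptyE: "mtyj \<Gamma> b e m f t {#}"
inductive_cases mtyj_add_msetE: "mtyj \<Gamma> b e m f t (add_mset \<sigma> A)"
inductive_cases pty_PPairE: "pty \<Gamma> e m f (PPair p q) A"

lemma mtyj_singletonD: "mtyj \<Gamma> b e m f t {#\<sigma>#} \<Longrightarrow> tyj \<Gamma> b e m f t \<sigma>"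
  by (auto elim!: mtyj_add_msetE mtyj_emptyE)

lemma pty_zero_counters:
  assumes "pty \<Gamma> e m f p A" and "e = 0" and "m = 0"
  shows "(\<exists>p1 p2. p = PPair p1 p2) \<and> A = {#TN#} \<and> tight_ctx \<Gamma>"
  using assms by (cases rule: pty.cases) auto

lemma tyj_Lam_tight_ctxE:
  assumes "tyj \<Gamma> b e m f (Lam p t) \<sigma>" and "tight_ctx \<Gamma>"
  obtains (arrow) A \<tau> where "\<sigma> = Arr A \<tau>"
    | (tight) \<Gamma>' f' \<tau> where "\<sigma> = TM" "tyj \<Gamma>' b e m f' t \<tau>" "tight \<tau>" "tight_ctx \<Gamma>'"
  using assms by (elim tyj_LamE) (blast intro: that tight_ctx_remove_restrI)+

lemma tyj_Sub_PPair_tight_ctxE: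
  assumes "tyj \<Gamma> b e m f (Sub t (PPair p q) u) \<sigma>" and "tight_ctx \<Gamma>"
  obtains (product) \<Delta> bu eu mu fu A B where "tyj \<Delta> bu eu mu fu u (Prod A B)" "tight_ctx \<Delta>"
    | (tight) \<Gamma>' bt et mt ft \<Delta> bu eu mu fu where
      "tyj \<Gamma>' bt et mt ft t \<sigma>" "tight_ctx \<Gamma>'" "tyj \<Delta> bu eu mu fu u TN" "tight_ctx \<Delta>"
      "b = bt + bu" "e = et + eu" "m = mt + mu"
proof -
  from assms obtain \<Gamma>' bt et mt ft ep mp fp A \<Delta> bu eu mu fu where
    \<Gamma>: "\<Gamma> = ctx_union (ctx_remove \<Gamma>' (PPair p q)) \<Delta>"
    and counters: "b = bt + bu" "e = et + eu + ep" "m = mt + mu + mp"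
    and t: "tyj \<Gamma>' bt et mt ft t \<sigma>"
    and pat: "pty (ctx_restr \<Gamma>' (PPair p q)) ep mp fp (PPair p q) A"
    and u: "mtyj \<Delta> bu eu mu fu u A"
    by (elim tyj_SubE) blast
  have \<Delta>: "tight_ctx \<Delta>" and removed: "tight_ctx (ctx_remove \<Gamma>' (PPair p q))"
    using assms(2) \<Gamma> by auto
  from pat consider (product) A1 B where "A = {#Prod A1 B#}"
    | (tight) "A = {#TN#}" "ep = 0" "mp = 0" "tight_ctx (ctx_restr \<Gamma>' (PPair p q))"
    by (elim pty_PPairE) auto
  then show thesis
  proof cases
    case product
    then show thesis using u \<Delta> by (auto dest!: mtyj_singletonD intro: that(1))
  next
    case tight
    with removed have "tight_ctx \<Gamma>'" by (blast intro: tight_ctx_remove_restrI)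
    with tight t u \<Delta> counters show thesis
      by (auto dest!: mtyj_singletonD intro: that(2))
  qed
qed

lemma canonical_tyj_counters_zero:
  shows "canM t \<Longrightarrow> (\<And>\<Gamma> b e m f \<sigma>. tyj \<Gamma> b e m f t \<sigma> \<Longrightarrow> tight_ctx \<Gamma> \<Longrightarrow> tight \<sigma> \<Longrightarrow>
      b = 0 \<and> e = 0 \<and> m = 0)"
    and "canN t \<Longrightarrow> (\<And>\<Gamma> b e m f \<sigma>. tyj \<Gamma> b e m f t \<sigma> \<Longrightarrow> tight_ctx \<Gamma> \<Longrightarrow>
      tight \<sigma> \<and> b = 0 \<and> e = 0 \<and> m = 0)"
proof (induction rule: canM_canN.inducts)
  case (M_lam t p)
  from M_lam.prems(1,2) show ?case
  proof (cases rule: tyj_Lam_tight_ctxE)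
    case arrow
    with M_lam.prems(3) show ?thesis by simp
  next
    case tight
    from M_lam.IH[OF tight(2,4,3)] show ?thesis .
  qed
next
  case (M_pair t u)
  then show ?case by (auto elim: tyj_PairE)
next
  case (M_sub t u p1 p2)
  from M_sub.prems(1,2) show ?case
  proof (cases rule: tyj_Sub_PPair_tight_ctxE)
    case product
    from M_sub.IH(2)[OF product] show ?thesis by simp
  next
    case tight
    from M_sub.IH(1)[OF tight(1,2) M_sub.prems(3)] M_sub.IH(2)[OF tight(3,4)] tight(5-7)
    show ?thesis by simp
  qed
next
  case (M_N t)
  from M_N.IH[OF M_N.prems(1,2)] show ?case by simp
next
  case (N_var x)
  then show ?case by (auto elim: tyj_VarE)
next
  case (N_app t u)
  show ?case
  proof (rule tyj_AppE[OF N_app.prems(1)])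
    fix \<Gamma>' bt et mt ft A \<Delta> bu eu mu fu
    assume "\<Gamma> = ctx_union \<Gamma>' \<Delta>" and t: "tyj \<Gamma>' bt et mt ft t (Arr A \<sigma>)"
    with N_app.prems(2) have "tight_ctx \<Gamma>'" by simp
    from N_app.IH[OF t this] show ?thesis by simp
  next
    fix f'
    assume "\<sigma> = TN" and "tyj \<Gamma> b e m f' t TN"
    from N_app.IH[OF this(2) N_app.prems(2)] this(1) show ?thesis by simp
  qed
next
  case (N_sub t u p1 p2)
  from N_sub.prems show ?case
  proof (cases rule: tyj_Sub_PPair_tight_ctxE)
    case product
    from N_sub.IH(2)[OF product] show ?thesis by simp
  next
    case tight
    from N_sub.IH(1)[OF tight(1,2)] N_sub.IH(2)[OF tight(3,4)] tight(5-7)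
    show ?thesis by simp
  qed
qed

lemma tyj_zero_counters_canonical:
  shows "tyj \<Gamma> b e m f t \<sigma> \<Longrightarrow> tight_ctx \<Gamma> \<Longrightarrow> b = 0 \<Longrightarrow> e = 0 \<Longrightarrow> m = 0 \<Longrightarrow>
      canM t \<and> (\<sigma> = TN \<longrightarrow> canN t) \<and> (\<forall>A \<tau>. \<sigma> \<noteq> Arr A \<tau>)"
    \<comment> \<open>the arrow clause is what excludes rule app in the induction\<close>
    and "mtyj \<Gamma> b e m f t A \<Longrightarrow> tight_ctx \<Gamma> \<Longrightarrow> b = 0 \<Longrightarrow> e = 0 \<Longrightarrow> m = 0 \<Longrightarrow>
      TN \<in># A \<longrightarrow> canN t"
proof (induction rule: tyj_mtyj.inducts)
  case (ax x \<sigma>)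
  then show ?case by (auto simp: tight_def intro: M_N N_var)
next
  case (abs_p \<Gamma> b e m f t \<tau> p)
  then have "tight_ctx \<Gamma>" by (blast intro: tight_ctx_remove_restrI)
  with abs_p show ?case by (auto intro: M_lam)
next
  case (app \<Gamma> bt et mt ft t A \<sigma> \<Delta> bu eu mu fu u)
  then show ?case by simp
next
  case (app_p \<Gamma> b e m f t u)
  then show ?case by (auto intro: M_N N_app)
next
  case (match \<Gamma> bt et mt ft t \<sigma> p ep mp fp A \<Delta> bu eu mu fu u)
  obtain p1 p2 where p: "p = PPair p1 p2"
    and "A = {#TN#}" and "tight_ctx (ctx_restr \<Gamma> p)"
    using pty_zero_counters[OF match.hyps(2)] match.prems by auto
  with match have "tight_ctx \<Gamma>" and "canN u"
    by (auto intro: tight_ctx_remove_restrI)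
  with match p show ?case by (auto intro: M_sub N_sub)
qed (auto intro: M_pair)

theorem lemma4:
  fixes \<Gamma> :: "'v ctx" and t :: "'v trm"
  assumes "linear_trm t"
    and "tyj \<Gamma> b e m f t \<sigma>"
    and "tight_ctx \<Gamma>" and "tight \<sigma>"
  shows "canM t \<longleftrightarrow> (b = 0 \<and> e = 0 \<and> m = 0)"
  using canonical_tyj_counters_zero(1) tyj_zero_counters_canonical(1) assms(2-4) by blast

end
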